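(* Let $S \in \mathbb{R}^{n\times n}$ be a diagonal matrix whose diagonal entries are strictly positive and bounded. Then for every $G \in \mathbb{R}^{m \times n}$ with $G \neq 0$, $$\langle G, \operatorname{PolarFactor}(G S) \rangle > 0.$$
   Context: $\langle A, B\rangle = \operatorname{tr}(A^\top B)$ denotes the Frobenius inner product. For a matrix $X$, $\operatorname{PolarFactor}(X) = X (X^\top X)^{-1/2}$, where $(X^\top X)^{-1/2}$ is the positive semidefinite inverse square root taken on the support of $X^\top X$ (Moore–Penrose inverse square root when $X$ is rank deficient); equivalently, if $X = U\Sigma V^\top$ is a compact singular value decomposition, $\operatorname{PolarFactor}(X) = UV^\top$. No squareness or full-rank assumption is made on $G$. *)

theory Defs
  imports "HOL-Analysis.Analysis"
begin

definition frob_inner :: "real^'n^'m \<Rightarrow> real^'n^'m \<Rightarrow> real" where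
  "frob_inner A B = trace (transpose A ** B)"

definition psd :: "real^'n^'n \<Rightarrow> bool" where
  "psd M \<longleftrightarrow> transpose M = M \<and> (\<forall>x. 0 \<le> x \<bullet> (M *v x))"

definition is_pinv :: "real^'n^'m \<Rightarrow> real^'m^'n \<Rightarrow> bool" where
  "is_pinv A B \<longleftrightarrow> A ** B ** A = A \<and> B ** A ** B = B \<and>
     transpose (A ** B) = A ** B \<and> transpose (B ** A) = B ** A"

definition pinv :: "real^'n^'m \<Rightarrow> real^'m^'n" where
  "pinv A = (THE B. is_pinv A B)"

definition psd_sqrt :: "real^'n^'n \<Rightarrow> real^'n^'n" where
  "psd_sqrt M = (THE R. psd R \<and> R ** R = M)"

definition PolarFactor :: "real^'n^'m \<Rightarrow> real^'n^'m" where
  "PolarFactor X = X ** psd_sqrt (pinv (transpose X ** X))"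

end

theory Submission
  imports Defs
begin

text \<open>
  Put \<open>X = G S\<close> and \<open>M = X\<^sup>T X\<close>. In an orthonormal eigenbasis of the positive semidefinite
  matrix \<open>M\<close> the pseudo-inverse inverts the nonzero eigenvalues, so
  \<open>X\<^sup>T PolarFactor X = M (M\<^sup>+)\<^bsup>1/2\<^esup> = M\<^bsup>1/2\<^esup>\<close>. As \<open>G = X S\<^sup>-\<^sup>1\<close>, the inner product equals
  \<open>tr (S\<^sup>-\<^sup>1 M\<^bsup>1/2\<^esup>) = (\<Sum>i. (M\<^bsup>1/2\<^esup>)\<^sub>i\<^sub>i / S\<^sub>i\<^sub>i)\<close>, a sum of nonnegative terms; it is positive
  because \<open>M\<^bsup>1/2\<^esup>\<close> is PSD and nonzero (its square is \<open>M \<noteq> 0\<close>), hence has a positive diagonal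
  entry. The spectral theorem behind the eigenbasis is proved by maximising the Rayleigh quotient
  on invariant subspaces.
\<close>

definition diag_mat :: "('n \<Rightarrow> real) \<Rightarrow> real^'n^'n" where
  "diag_mat d = (\<chi> i j. if i = j then d i else 0)"

lemma diag_mat_mult_vec: "(diag_mat d *v x) $ i = d i * x $ i"
  by (simp add: diag_mat_def matrix_vector_mult_def if_distrib if_distribR sum.delta cong: if_cong)

lemma mult_diag_mat_entry: "(A ** diag_mat d) $ i $ j = A $ i $ j * d j"
  by (simp add: diag_mat_def matrix_matrix_mult_def if_distrib if_distribR sum.delta' cong: if_cong)

lemma diag_mat_mult_entry: "(diag_mat d ** A) $ i $ j = d i * A $ i $ j"
  by (simp add: diag_mat_def matrix_matrix_mult_def if_distrib if_distribR sum.delta cong: if_cong)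

lemma diag_mat_mult_diag_mat: "diag_mat a ** diag_mat b = diag_mat (\<lambda>i. a i * b i)"
  by (simp add: vec_eq_iff mult_diag_mat_entry) (simp add: diag_mat_def)

lemma transpose_diag_mat [simp]: "transpose (diag_mat d) = diag_mat d"
  by (simp add: diag_mat_def transpose_def vec_eq_iff)

lemma diag_mat_one: "diag_mat (\<lambda>i. 1) = mat 1"
  by (simp add: diag_mat_def mat_def vec_eq_iff)

lemma mult_diag_mat_eq_iff_columns:
  "A ** Q = Q ** diag_mat d \<longleftrightarrow> (\<forall>k. A *v column k Q = d k *\<^sub>R column k Q)"
proof -
  have "(A ** Q) $ i $ k = (A *v column k Q) $ i" for i k
    by (simp add: matrix_matrix_mult_def matrix_vector_mult_def column_def)
  then show ?thesis
    by (auto simp: vec_eq_iff mult_diag_mat_entry column_def mult.commute)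
qed

lemma trace_diag_mat_mult: "trace (diag_mat d ** A) = (\<Sum>i\<in>UNIV. d i * A $ i $ i)"
  by (simp add: trace_def diag_mat_mult_entry)

lemma inner_mult_vec_transpose: "x \<bullet> (A *v y) = (transpose A *v x) \<bullet> (y :: real^'n)"
  by (simp add: dot_lmul_matrix)

lemma symmetric_inner_commute:
  fixes A :: "real^'n^'n"
  assumes "transpose A = A"
  shows "x \<bullet> (A *v y) = (A *v x) \<bullet> y"
  by (metis assms inner_mult_vec_transpose)

lemma linear_le_quadratic_imp_zero:
  fixes c K :: real
  assumes "\<And>t. t * c \<le> t\<^sup>2 * K"
  shows "c = 0"
proof -
  define D where "D = \<bar>K\<bar> + 1"
  have D: "D > 0" "K < D" by (auto simp: D_def)
  have "c / D * c \<le> (c / D)\<^sup>2 * K" by (rule assms)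
  then have "c\<^sup>2 * D \<le> c\<^sup>2 * K"
    using D by (simp add: power2_eq_square field_simps)
  then have "c\<^sup>2 \<le> 0"
    using D by (smt (verit) mult_less_cancel_left zero_le_power2)
  then show ?thesis by simp
qed

lemma quadratic_form_attains_max_on_subspace:
  fixes A :: "real^'n^'n"
  assumes V: "subspace V" and x: "x \<in> V" "x \<noteq> 0"
  obtains v where "v \<in> V" "norm v = 1"
    "\<And>y. y \<in> V \<Longrightarrow> y \<bullet> (A *v y) \<le> (v \<bullet> (A *v v)) * (y \<bullet> y)"
proof -
  define f where "f y = y \<bullet> (A *v y)" for y
  define K where "K = V \<inter> sphere 0 1"
  have "compact K"
    unfolding K_def by (simp add: closed_subspace closed_Int_compact V)
  moreover have "x /\<^sub>R norm x \<in> K"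
    using x V by (simp add: K_def subspace_scale)
  moreover have "continuous_on K f"
    unfolding f_def by (intro continuous_intros linear_continuous_on matrix_vector_mul_linear)
  ultimately obtain v where v: "v \<in> K" and vmax: "\<And>y. y \<in> K \<Longrightarrow> f y \<le> f v"
    using continuous_attains_sup[of K f] by blast
  have "f y \<le> f v * (y \<bullet> y)" if "y \<in> V" for y
  proof (cases "y = 0")
    case False
    have "y /\<^sub>R norm y \<in> K"
      using that V False by (simp add: K_def subspace_scale)
    then have "f (y /\<^sub>R norm y) \<le> f v" by (rule vmax)
    moreover have "f (y /\<^sub>R norm y) = f y / (norm y)\<^sup>2"
      by (simp add: f_def matrix_vector_mult_scaleR power2_eq_square field_simps)
    ultimately have "f y / (norm y)\<^sup>2 \<le> f v" by simp
    then show ?thesis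
      using False by (simp add: dot_square_norm divide_le_eq mult.commute)
  qed (simp add: f_def)
  with v that show ?thesis by (auto simp: K_def f_def)
qed

text \<open>The Rayleigh quotient is stationary at a maximiser \<open>v\<close>: for \<open>w \<bottom> v\<close> the
  inequality at \<open>v + t w\<close> forces \<open>w \<bullet> A v = 0\<close>, so \<open>A v\<close> has no component orthogonal to \<open>v\<close>.\<close>
lemma rayleigh_maximizer_is_eigenvector:
  fixes A :: "real^'n^'n"
  assumes sym: "transpose A = A" and V: "subspace V"
    and inv: "\<And>x. x \<in> V \<Longrightarrow> A *v x \<in> V"
    and v: "v \<in> V" "norm v = 1"
    and vmax: "\<And>y. y \<in> V \<Longrightarrow> y \<bullet> (A *v y) \<le> (v \<bullet> (A *v v)) * (y \<bullet> y)"
  shows "A *v v = (v \<bullet> (A *v v)) *\<^sub>R v"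
proof -
  define \<mu> where "\<mu> = v \<bullet> (A *v v)"
  have vv: "v \<bullet> v = 1" using v by (simp add: dot_square_norm)
  have stationary: "w \<bullet> (A *v v) = 0" if w: "w \<in> V" "w \<bullet> v = 0" for w
  proof (rule linear_le_quadratic_imp_zero)
    fix t
    have "v + t *\<^sub>R w \<in> V" using v w V by (simp add: subspace_add subspace_scale)
    then have "(v + t *\<^sub>R w) \<bullet> (A *v (v + t *\<^sub>R w)) \<le> \<mu> * ((v + t *\<^sub>R w) \<bullet> (v + t *\<^sub>R w))"
      unfolding \<mu>_def by (rule vmax)
    then have "\<mu> + 2 * t * (w \<bullet> (A *v v)) + t\<^sup>2 * (w \<bullet> (A *v w)) \<le> \<mu> * (1 + t\<^sup>2 * (w \<bullet> w))"
      using symmetric_inner_commute[OF sym, of v w] vv w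
      by (simp add: \<mu>_def algebra_simps inner_add_left inner_add_right power2_eq_square
          inner_commute matrix_vector_right_distrib matrix_vector_mult_scaleR)
    then show "t * (w \<bullet> (A *v v)) \<le> t\<^sup>2 * ((\<mu> * (w \<bullet> w) - w \<bullet> (A *v w)) / 2)"
      by (simp add: algebra_simps)
  qed
  define u where "u = A *v v - \<mu> *\<^sub>R v"
  have "u \<in> V" using inv v V by (simp add: u_def subspace_diff subspace_scale)
  moreover have uv: "u \<bullet> v = 0"
    using vv by (simp add: u_def \<mu>_def inner_diff_left inner_commute[of "A *v v"])
  ultimately have "u \<bullet> (A *v v) = 0" by (rule stationary)
  with uv have "u \<bullet> u = 0"
    by (simp add: u_def inner_diff_right)
  then show ?thesis by (simp add: u_def \<mu>_def)
qed

lemma symmetric_orthonormal_eigenvectors: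
  fixes A :: "real^'n^'n"
  assumes sym: "transpose A = A"
  shows "k \<le> CARD('n) \<Longrightarrow> \<exists>B. finite B \<and> card B = k \<and> pairwise orthogonal B \<and>
           (\<forall>b\<in>B. norm b = 1 \<and> (\<exists>l. A *v b = l *\<^sub>R b))"
proof (induction k)
  case 0
  show ?case by (intro exI[of _ "{}"]) auto
next
  case (Suc k)
  then obtain B where B: "finite B" "card B = k" "pairwise orthogonal B"
    and eigen: "\<forall>b\<in>B. norm b = 1 \<and> (\<exists>l. A *v b = l *\<^sub>R b)"
    by auto
  define V where "V = {x. \<forall>b\<in>B. orthogonal b x}"
  have V: "subspace V"
    unfolding V_def subspace_def by (auto intro: orthogonal_clauses)
  have invariant: "A *v x \<in> V" if "x \<in> V" for x
  proof -
    have "orthogonal b (A *v x)" if "b \<in> B" for b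
    proof -
      obtain l where "A *v b = l *\<^sub>R b" using eigen \<open>b \<in> B\<close> by blast
      then have "b \<bullet> (A *v x) = l * (b \<bullet> x)" using symmetric_inner_commute[OF sym, of b x] by simp
      then show ?thesis using \<open>x \<in> V\<close> \<open>b \<in> B\<close> by (simp add: V_def orthogonal_def)
    qed
    then show ?thesis by (simp add: V_def)
  qed
  have "dim B < DIM(real^'n)"
    using B Suc.prems dim_le_card'[of B] by simp
  then obtain x where "x \<noteq> 0" "\<And>y. y \<in> span B \<Longrightarrow> orthogonal x y"
    by (rule orthogonal_to_subspace_exists) blast
  then have "x \<in> V" "x \<noteq> 0"
    by (auto simp: V_def orthogonal_commute span_base)
  then obtain v where v: "v \<in> V" "norm v = 1"
    and "\<And>y. y \<in> V \<Longrightarrow> y \<bullet> (A *v y) \<le> (v \<bullet> (A *v v)) * (y \<bullet> y)"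
    using V quadratic_form_attains_max_on_subspace by metis
  then have "A *v v = (v \<bullet> (A *v v)) *\<^sub>R v"
    using rayleigh_maximizer_is_eigenvector[OF sym V invariant] by blast
  moreover have "v \<notin> B"
    using v by (auto simp: V_def orthogonal_def)
  ultimately show ?case
    using B eigen v
    by (intro exI[of _ "insert v B"]) (auto simp: pairwise_insert V_def orthogonal_commute)
qed

lemma orthogonal_matrix_mult_cancel:
  assumes "orthogonal_matrix Q"
  shows "A ** transpose Q ** Q = A" "A ** Q ** transpose Q = A"
  using assms by (simp_all add: orthogonal_matrix_def flip: matrix_mul_assoc)

definition conj_diag :: "real^'n^'n \<Rightarrow> ('n \<Rightarrow> real) \<Rightarrow> real^'n^'n" where
  "conj_diag Q d = Q ** diag_mat d ** transpose Q"

lemma conj_diag_eq_iff: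
  assumes Q: "orthogonal_matrix Q"
  shows "A = conj_diag Q d \<longleftrightarrow> A ** Q = Q ** diag_mat d"
proof
  assume "A ** Q = Q ** diag_mat d"
  then show "A = conj_diag Q d"
    using orthogonal_matrix_mult_cancel(2)[OF Q, of A] by (simp add: conj_diag_def)
qed (use Q in \<open>simp add: conj_diag_def orthogonal_matrix_mult_cancel\<close>)

theorem symmetric_matrix_diagonalizable:
  fixes A :: "real^'n^'n"
  assumes sym: "transpose A = A"
  obtains Q d where "orthogonal_matrix Q" "A = conj_diag Q d"
proof -
  obtain B where B: "finite B" "card B = CARD('n)" "pairwise orthogonal B"
    and eigen: "\<forall>b\<in>B. norm b = 1 \<and> (\<exists>l. A *v b = l *\<^sub>R b)"
    using symmetric_orthonormal_eigenvectors[OF sym] by blast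
  then obtain e where e: "bij_betw e (UNIV :: 'n set) B"
    using finite_same_card_bij[of "UNIV :: 'n set" B] by auto
  then have eB: "e k \<in> B" for k
    using bij_betwE by blast
  have "\<forall>k. \<exists>l. A *v e k = l *\<^sub>R e k"
    using eigen eB by blast
  then obtain d where d: "\<And>k. A *v e k = d k *\<^sub>R e k"
    by metis
  define Q :: "real^'n^'n" where "Q = (\<chi> i k. e k $ i)"
  have column_Q: "column k Q = e k" for k
    by (simp add: Q_def column_def vec_eq_iff)
  have "orthogonal (e i) (e j)" if "i \<noteq> j" for i j
    using B(3) e eB that by (metis bij_betw_imp_inj_on inj_def pairwise_def)
  then have "orthogonal_matrix Q"
    using eigen eB by (simp add: orthogonal_matrix_orthonormal_columns column_Q)
  moreover have "A = conj_diag Q d"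
    using d by (simp add: conj_diag_eq_iff[OF \<open>orthogonal_matrix Q\<close>] mult_diag_mat_eq_iff_columns column_Q)
  ultimately show ?thesis by (rule that)
qed

lemma conj_diag_mult:
  assumes "orthogonal_matrix Q"
  shows "conj_diag Q a ** conj_diag Q b = conj_diag Q (\<lambda>i. a i * b i)"
  using assms
  by (simp add: conj_diag_def matrix_mul_assoc orthogonal_matrix_mult_cancel)
    (simp flip: matrix_mul_assoc add: diag_mat_mult_diag_mat)

lemma transpose_conj_diag [simp]: "transpose (conj_diag Q d) = conj_diag Q d"
  by (simp add: conj_diag_def matrix_transpose_mul matrix_mul_assoc)

lemma psd_congruence:
  fixes A :: "real^'n^'n" and P :: "real^'m^'n"
  assumes "psd A"
  shows "psd (transpose P ** A ** P)"
proof -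
  have "x \<bullet> ((transpose P ** A ** P) *v x) = (P *v x) \<bullet> (A *v (P *v x))" for x
    using inner_mult_vec_transpose[of x "transpose P"] by (simp flip: matrix_vector_mul_assoc)
  then show ?thesis
    using assms by (simp add: psd_def matrix_transpose_mul matrix_mul_assoc)
qed

lemma psd_transpose_mult_self: "psd (transpose X ** X)"
proof -
  have "psd (mat 1 :: real^'n^'n)"
    by (simp add: psd_def)
  then show ?thesis
    using psd_congruence[of "mat 1" X] by simp
qed

lemma transpose_mult_self_eq_0_iff:
  fixes X :: "real^'n^'m"
  shows "transpose X ** X = 0 \<longleftrightarrow> X = 0"
proof
  assume "transpose X ** X = 0"
  moreover have "(X *v x) \<bullet> (X *v x) = x \<bullet> ((transpose X ** X) *v x)" for x
    using inner_mult_vec_transpose[of x "transpose X"] by (simp flip: matrix_vector_mul_assoc)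
  ultimately have "X *v x = 0" for x
    by simp
  then show "X = 0"
    by (simp add: matrix_eq)
qed simp

lemma psd_diag_mat_iff: "psd (diag_mat p) \<longleftrightarrow> (\<forall>i. 0 \<le> p i)"
proof
  assume "psd (diag_mat p)"
  then have "0 \<le> axis i 1 \<bullet> (diag_mat p *v axis i 1)" for i
    by (simp add: psd_def)
  then show "\<forall>i. 0 \<le> p i"
    by (simp add: inner_axis' diag_mat_mult_vec)
next
  assume "\<forall>i. 0 \<le> p i"
  then have "0 \<le> x $ i * (p i * x $ i)" for x i
    by (metis mult.left_commute mult_nonneg_nonneg zero_le_square)
  then show "psd (diag_mat p)"
    by (simp add: psd_def inner_vec_def diag_mat_mult_vec sum_nonneg)
qed

lemma psd_conj_diag_iff:
  assumes Q: "orthogonal_matrix Q"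
  shows "psd (conj_diag Q p) \<longleftrightarrow> (\<forall>i. 0 \<le> p i)"
proof -
  have "transpose Q ** conj_diag Q p ** Q = diag_mat p"
    using Q by (simp add: conj_diag_def matrix_mul_assoc orthogonal_matrix_mult_cancel)
      (simp add: orthogonal_matrix_def)
  moreover have "transpose (transpose Q) ** diag_mat p ** transpose Q = conj_diag Q p"
    by (simp add: conj_diag_def)
  ultimately show ?thesis
    by (metis psd_congruence psd_diag_mat_iff)
qed

lemma psd_diagonalizable:
  fixes A :: "real^'n^'n"
  assumes "psd A"
  obtains Q d where "orthogonal_matrix Q" "\<And>i. 0 \<le> d i" "A = conj_diag Q d"
  using assms symmetric_matrix_diagonalizable[of A] psd_conj_diag_iff
  by (metis psd_def)

lemma is_pinv_unique:
  assumes 1: "is_pinv A B1" and 2: "is_pinv A B2"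
  shows "B1 = B2"
proof -
  have a1: "A ** B1 ** A = A" "B1 ** A ** B1 = B1" "transpose (A ** B1) = A ** B1" "transpose (B1 ** A) = B1 ** A"
    using 1 by (auto simp: is_pinv_def)
  have a2: "A ** B2 ** A = A" "B2 ** A ** B2 = B2" "transpose (A ** B2) = A ** B2" "transpose (B2 ** A) = B2 ** A"
    using 2 by (auto simp: is_pinv_def)
  have "B1 = B1 ** transpose (A ** B1)"
    using a1(2,3) by (simp add: matrix_mul_assoc)
  also have "\<dots> = B1 ** transpose (A ** B2 ** A ** B1)"
    using a2(1) by simp
  also have "\<dots> = B1 ** A ** B1 ** A ** B2"
    using a1(3) a2(3) by (simp add: matrix_transpose_mul matrix_mul_assoc)
  also have "\<dots> = B1 ** A ** B2"
    using a1(2) by simp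
  also have "\<dots> = B1 ** A ** B2 ** A ** B2"
    using a2(2) by (metis matrix_mul_assoc)
  also have "\<dots> = transpose (B2 ** A ** B1 ** A) ** B2"
    using a1(4) a2(4) by (simp add: matrix_transpose_mul matrix_mul_assoc)
  also have "\<dots> = transpose (B2 ** A) ** B2"
    using a1(1) by (metis matrix_mul_assoc)
  also have "\<dots> = B2"
    using a2(2,4) by simp
  finally show ?thesis .
qed

lemma pinv_eqI: "is_pinv A B \<Longrightarrow> pinv A = B"
  unfolding pinv_def using is_pinv_unique by blast

lemma pinv_conj_diag:
  assumes "orthogonal_matrix Q"
  shows "pinv (conj_diag Q d) = conj_diag Q (\<lambda>i. inverse (d i))"
proof (rule pinv_eqI)
  have cancel: "d i * inverse (d i) * d i = d i"
    "inverse (d i) * d i * inverse (d i) = inverse (d i)" for i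
    by (cases "d i = 0"; simp)+
  show "is_pinv (conj_diag Q d) (conj_diag Q (\<lambda>i. inverse (d i)))"
    using assms by (simp add: is_pinv_def conj_diag_mult cancel)
qed

text \<open>With \<open>y = R x - sqrt c x\<close> one gets \<open>R y = - sqrt c y\<close>, which positivity of \<open>R\<close> rules out
  unless \<open>y = 0\<close>; for \<open>c = 0\<close> use \<open>|R x|\<^sup>2 = x \<bullet> R\<^sup>2 x\<close> instead.\<close>
lemma psd_eigenvector_of_square:
  assumes R: "psd R" and RRx: "R *v (R *v x) = c *\<^sub>R x" and c: "0 \<le> c"
  shows "R *v x = sqrt c *\<^sub>R x"
proof -
  define s where "s = sqrt c"
  define y where "y = R *v x - s *\<^sub>R x"
  have "R *v y + s *\<^sub>R y = R *v (R *v x) - (s * s) *\<^sub>R x"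
    by (simp add: y_def algebra_simps matrix_vector_mult_scaleR matrix_vector_right_distrib)
  also have "\<dots> = 0"
    using RRx c by (simp add: s_def)
  finally have "0 = y \<bullet> (R *v y) + s * (y \<bullet> y)"
    by (metis inner_add_right inner_scaleR_right inner_zero_right)
  moreover have "0 \<le> y \<bullet> (R *v y)"
    using R by (simp add: psd_def)
  ultimately have "s * (y \<bullet> y) \<le> 0"
    by linarith
  show ?thesis
  proof (cases "s = 0")
    case True
    then have "c = 0" by (simp add: s_def c)
    have "(R *v x) \<bullet> (R *v x) = x \<bullet> (R *v (R *v x))"
      using R by (simp add: psd_def inner_mult_vec_transpose)
    then show ?thesis
      using RRx \<open>c = 0\<close> by simp
  next
    case False
    then have "y \<bullet> y \<le> 0"
      using \<open>s * (y \<bullet> y) \<le> 0\<close> c by (simp add: s_def mult_le_0_iff)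
    then have "y = 0"
      by (meson inner_ge_zero inner_eq_zero_iff order_antisym)
    then show ?thesis by (simp add: y_def s_def)
  qed
qed

lemma psd_sqrt_unique_conj_diag:
  assumes Q: "orthogonal_matrix Q" and R: "psd R" "R ** R = conj_diag Q p"
    and p: "\<And>i. 0 \<le> p i"
  shows "R = conj_diag Q (\<lambda>i. sqrt (p i))"
proof -
  have "R ** R ** Q = Q ** diag_mat p"
    using R(2) conj_diag_eq_iff[OF Q] by blast
  then have "R *v (R *v column k Q) = p k *\<^sub>R column k Q" for k
    by (simp add: mult_diag_mat_eq_iff_columns matrix_vector_mul_assoc)
  then have "R *v column k Q = sqrt (p k) *\<^sub>R column k Q" for k
    using psd_eigenvector_of_square R(1) p by blast
  then show ?thesis
    by (simp add: conj_diag_eq_iff[OF Q] mult_diag_mat_eq_iff_columns)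
qed

lemma psd_sqrt_conj_diag:
  assumes Q: "orthogonal_matrix Q" and p: "\<And>i. 0 \<le> p i"
  shows "psd_sqrt (conj_diag Q p) = conj_diag Q (\<lambda>i. sqrt (p i))"
  unfolding psd_sqrt_def
proof (rule the_equality)
  show "psd (conj_diag Q (\<lambda>i. sqrt (p i))) \<and>
      conj_diag Q (\<lambda>i. sqrt (p i)) ** conj_diag Q (\<lambda>i. sqrt (p i)) = conj_diag Q p"
    using Q p by (simp add: psd_conj_diag_iff conj_diag_mult)
qed (use psd_sqrt_unique_conj_diag Q p in blast)

lemma psd_sqrt:
  assumes "psd A"
  shows "psd (psd_sqrt A)" "psd_sqrt A ** psd_sqrt A = A"
proof -
  obtain Q d where Q: "orthogonal_matrix Q" and d: "\<And>i. 0 \<le> d i" and A: "A = conj_diag Q d"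
    using assms psd_diagonalizable by blast
  show "psd (psd_sqrt A)" "psd_sqrt A ** psd_sqrt A = A"
    using Q d by (simp_all add: A psd_sqrt_conj_diag psd_conj_diag_iff conj_diag_mult)
qed

text \<open>In an eigenbasis of \<open>A\<close> this is \<open>d * sqrt (d\<^sup>+) = sqrt d\<close> for each eigenvalue \<open>d \<ge> 0\<close>,
  including \<open>d = 0\<close> where \<open>d\<^sup>+ = 0\<close>.\<close>
lemma mult_psd_sqrt_pinv:
  assumes "psd A"
  shows "A ** psd_sqrt (pinv A) = psd_sqrt A"
proof -
  obtain Q d where Q: "orthogonal_matrix Q" and d: "\<And>i. 0 \<le> d i" and A: "A = conj_diag Q d"
    using assms psd_diagonalizable by blast
  have "d i * sqrt (inverse (d i)) = sqrt (d i)" for i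
    using d[of i] by (simp add: real_sqrt_inverse real_div_sqrt flip: divide_inverse)
  then show ?thesis
    using Q d by (simp add: A pinv_conj_diag psd_sqrt_conj_diag conj_diag_mult)
qed

lemma inner_axis_mult_vec_axis: "axis i 1 \<bullet> (A *v axis j 1) = (A :: real^'n^'m) $ i $ j"
  by (simp add: matrix_vector_mult_basis inner_axis' column_def)

lemma psd_diagonal_nonneg:
  assumes "psd P"
  shows "0 \<le> P $ i $ i"
  using assms inner_axis_mult_vec_axis[of i P i] unfolding psd_def by metis

text \<open>Positivity at \<open>e\<^sub>j - P\<^sub>i\<^sub>j e\<^sub>i\<close> gives \<open>-2 P\<^sub>i\<^sub>j\<^sup>2 \<ge> 0\<close> once \<open>P\<^sub>i\<^sub>i = P\<^sub>j\<^sub>j = 0\<close>.\<close>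
lemma psd_zero_diagonal_imp_zero:
  assumes P: "psd P" and zero: "\<And>i. P $ i $ i = 0"
  shows "P = 0"
proof -
  have "P $ i $ j = 0" for i j
  proof -
    define x where "x = axis j 1 - P $ i $ j *\<^sub>R axis i (1::real)"
    have "P $ j $ i = transpose P $ i $ j"
      by (simp add: transpose_def)
    then have "P $ j $ i = P $ i $ j"
      using P by (simp add: psd_def)
    then have "x \<bullet> (P *v x) = - 2 * (P $ i $ j)\<^sup>2"
      using zero[of i] zero[of j]
      by (simp add: x_def inner_diff_left inner_diff_right matrix_vector_mult_diff_distrib
          matrix_vector_mult_scaleR inner_axis_mult_vec_axis power2_eq_square)
    moreover have "0 \<le> x \<bullet> (P *v x)"
      using P by (simp add: psd_def)
    ultimately show ?thesis by simp
  qed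
  then show ?thesis by (simp add: vec_eq_iff)
qed

lemma trace_diag_mat_mult_psd_pos:
  assumes a: "\<And>i. 0 < a i" and P: "psd P" "P \<noteq> 0"
  shows "0 < trace (diag_mat a ** P)"
proof -
  obtain i where "P $ i $ i \<noteq> 0"
    using psd_zero_diagonal_imp_zero P by blast
  then have "0 < a i * P $ i $ i"
    using a[of i] psd_diagonal_nonneg[OF P(1), of i] by simp
  moreover have "0 \<le> a k * P $ k $ k" for k
    using a[of k] psd_diagonal_nonneg[OF P(1), of k] by simp
  ultimately show ?thesis
    unfolding trace_diag_mat_mult by (intro sum_pos2[of UNIV i]) auto
qed

theorem mainTheorem2:
  fixes S :: "real^'n^'n" and G :: "real^'n^'m"
  assumes diag: "\<And>i j. i \<noteq> j \<Longrightarrow> S $ i $ j = 0"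
    and pos: "\<And>i. S $ i $ i > 0"
    and nz: "G \<noteq> 0"
  shows "frob_inner G (PolarFactor (G ** S)) > 0"
proof -
  define s where "s i = S $ i $ i" for i
  define X where "X = G ** S"
  define M where "M = transpose X ** X"
  have S: "S = diag_mat s"
    using diag by (auto simp: vec_eq_iff diag_mat_def s_def)
  have "s i \<noteq> 0" for i
    using pos[of i] by (simp add: s_def)
  then have G: "G = X ** diag_mat (\<lambda>i. inverse (s i))"
    by (simp add: X_def S diag_mat_mult_diag_mat diag_mat_one flip: matrix_mul_assoc)
  have M: "psd M" "M \<noteq> 0"
    using nz G by (auto simp: M_def psd_transpose_mult_self transpose_mult_self_eq_0_iff)
  have "frob_inner G (PolarFactor X) = trace (diag_mat (\<lambda>i. inverse (s i)) ** (M ** psd_sqrt (pinv M)))"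
    by (subst (1) G) (simp add: frob_inner_def PolarFactor_def M_def matrix_transpose_mul matrix_mul_assoc)
  also have "\<dots> = trace (diag_mat (\<lambda>i. inverse (s i)) ** psd_sqrt M)"
    using M by (simp add: mult_psd_sqrt_pinv)
  also have "\<dots> > 0"
  proof (rule trace_diag_mat_mult_psd_pos)
    show "psd_sqrt M \<noteq> 0"
      using M psd_sqrt(2)[OF M(1)] by (metis times0_left)
  qed (use pos M psd_sqrt(1) in \<open>auto simp: s_def\<close>)
  finally show ?thesis
    by (simp add: X_def)
qed

end
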